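(* Identify $S^1$ with $[0,1]/(0\sim1)$. Let $f:S^1\multimap S^1$ be given by $f(x)=\{0,\tfrac12\}$ for $x\notin[\tfrac13,\tfrac23]$ and $f(x)=\{0,\tfrac12,\tfrac{3x-1}{2}\}$ for $x\in[\tfrac13,\tfrac23]$. Then $f$ is a (lower and upper semicontinuous) at-most-3-valued map, but there is no function $w:S^1\times S^1\to\mathbb{N}$ such that $(f,w)$ is an $\mathbb{N}$-weighted map.
   Context: A weighted map from $X$ to $Y$ is a pair $\psi=(n_\psi,w_\psi)$ where (1) $n_\psi:X\multimap Y$ is an upper semicontinuous multivalued map with $n_\psi(x)$ a finite subset of $Y$ for all $x$; (2) $w_\psi:X\times Y\to\mathbb{N}$ is a function such that (i) $w_\psi(x,y)=0$ whenever $y\notin n_\psi(x)$, and (ii) for every open $U\subseteq Y$ and $x\in X$ with $n_\psi(x)\cap\partial U=\emptyset$ there is an open neighborhood $V$ of $x$ with $\sum_{y\in U}w_\psi(x,y)=\sum_{y\in U}w_\psi(z,y)$ for all $z\in V$. It is an $\mathbb{N}$-weighted map if moreover $w_\psi(x,y)>0$ for all $x\in X$ and $y\in n_\psi(x)$. An at-most-$n$-valued map is a lower and upper semicontinuous multivalued map whose values are nonempty sets of cardinality at most $n$. *)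

theory Defs
  imports "HOL-Analysis.Analysis"
begin

definition usc_map :: "'a topology \<Rightarrow> 'b topology \<Rightarrow> ('a \<Rightarrow> 'b set) \<Rightarrow> bool" where
  "usc_map X Y F \<longleftrightarrow> (\<forall>x\<in>topspace X. F x \<subseteq> topspace Y) \<and>
     (\<forall>U. openin Y U \<longrightarrow> openin X {x \<in> topspace X. F x \<subseteq> U})"

definition lsc_map :: "'a topology \<Rightarrow> 'b topology \<Rightarrow> ('a \<Rightarrow> 'b set) \<Rightarrow> bool" where
  "lsc_map X Y F \<longleftrightarrow> (\<forall>x\<in>topspace X. F x \<subseteq> topspace Y) \<and>
     (\<forall>U. openin Y U \<longrightarrow> openin X {x \<in> topspace X. F x \<inter> U \<noteq> {}})"

text \<open>Weighted map (n, w). Since w x vanishes outside the finite set n x, the sum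
  over y in U of w x y is the finite sum over U \<inter> n x.\<close>
definition weighted_map ::
  "'a topology \<Rightarrow> 'b topology \<Rightarrow> ('a \<Rightarrow> 'b set) \<Rightarrow> ('a \<Rightarrow> 'b \<Rightarrow> nat) \<Rightarrow> bool" where
  "weighted_map X Y n w \<longleftrightarrow>
     usc_map X Y n \<and>
     (\<forall>x\<in>topspace X. finite (n x)) \<and>
     (\<forall>x\<in>topspace X. \<forall>y\<in>topspace Y. y \<notin> n x \<longrightarrow> w x y = 0) \<and>
     (\<forall>U x. openin Y U \<and> x \<in> topspace X \<and> n x \<inter> (Y frontier_of U) = {} \<longrightarrow>
        (\<exists>V. openin X V \<and> x \<in> V \<and>
             (\<forall>z\<in>V. (\<Sum>y\<in>U \<inter> n x. w x y) = (\<Sum>y\<in>U \<inter> n z. w z y))))"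

definition N_weighted_map ::
  "'a topology \<Rightarrow> 'b topology \<Rightarrow> ('a \<Rightarrow> 'b set) \<Rightarrow> ('a \<Rightarrow> 'b \<Rightarrow> nat) \<Rightarrow> bool" where
  "N_weighted_map X Y n w \<longleftrightarrow> weighted_map X Y n w \<and>
     (\<forall>x\<in>topspace X. \<forall>y\<in>n x. w x y > 0)"

definition at_most_n_valued :: "'a topology \<Rightarrow> 'b topology \<Rightarrow> nat \<Rightarrow> ('a \<Rightarrow> 'b set) \<Rightarrow> bool" where
  "at_most_n_valued X Y k F \<longleftrightarrow> lsc_map X Y F \<and> usc_map X Y F \<and>
     (\<forall>x\<in>topspace X. F x \<noteq> {} \<and> finite (F x) \<and> card (F x) \<le> k)"

text \<open>The circle S^1 = [0,1]/(0~1), realised as the unit circle in the complex plane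
  via the standard homeomorphism t \<mapsto> exp(2 pi i t).\<close>
definition S1 :: "complex topology" where
  "S1 = top_of_set (sphere 0 1)"

definition circ :: "real \<Rightarrow> complex" where
  "circ t = cis (2 * pi * t)"

definition example_f :: "complex \<Rightarrow> complex set" where
  "example_f z = {circ 0, circ (1/2)} \<union>
     {circ ((3 * t - 1) / 2) | t. t \<in> {1/3..2/3} \<and> z = circ t}"

end

theory Submission
  imports Defs
begin

text \<open>On the circle, example_f z is {1, -1} together with, on the arc Re z \<le> -1/2, the
  point arc_stretch z, where arc_stretch is continuous on Re z < 0 and sends the two endpoints
  of the arc to 1 and -1; this description gives lower and upper semicontinuity.

  Away from circ (1/3) the value 1 is isolated in example_f z uniformly nearby, so in an
  \<nat>-weighted map the weight w z 1 is locally constant, hence constant on the connected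
  punctured circle. At circ (1/3) the third value leaves 1 into the arc: conservation of the
  weight of a small ball around 1 forces w z 1 on one side and w z 1 + w z (arc_stretch z),
  with positive second summand, on the other side.\<close>

lemma norm_circ [simp]: "norm (circ t) = 1"
  by (simp add: circ_def)

lemma circ_0 [simp]: "circ 0 = 1" and circ_half [simp]: "circ (1/2) = -1"
  by (simp_all add: circ_def)

lemma Re_circ: "Re (circ t) = cos (2*pi*t)" and Im_circ: "Im (circ t) = sin (2*pi*t)"
  by (simp_all add: circ_def)

lemma continuous_on_circ: "continuous_on A circ"
  unfolding circ_def cis_conv_exp by (intro continuous_intros)

lemma sphere_eq_circ_image: "sphere 0 1 = circ ` {0..<1}"
proof (intro equalityI subsetI)
  fix z :: complex assume "z \<in> sphere 0 1"
  then have "z = circ (Arg2pi z / (2*pi))"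
    using Arg2pi_eq[of z] by (simp add: circ_def cis_conv_exp)
  moreover have "Arg2pi z / (2*pi) \<in> {0..<1}"
    using Arg2pi_ge_0[of z] Arg2pi_lt_2pi[of z] by auto
  ultimately show "z \<in> circ ` {0..<1}" by blast
qed auto

lemma cos_2pi_fold: "cos (2*pi*t) = cos (2*pi*min t (1-t))"
  by (cases "t \<le> 1 - t")
     (simp_all add: min_def right_diff_distrib flip: cos_minus [of "2*pi*t - 2*pi"])

lemma Re_circ_le_neg_half_iff:
  assumes "t \<in> {0..1}" shows "Re (circ t) \<le> -1/2 \<longleftrightarrow> t \<in> {1/3..2/3}"
proof -
  have "Re (circ t) \<le> cos (2*pi/3) \<longleftrightarrow> 2*pi/3 \<le> 2*pi*min t (1-t)"
    unfolding Re_circ cos_2pi_fold[of t] using assms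
    by (intro cos_mono_le_eq) (auto simp: min_def)
  also have "\<dots> \<longleftrightarrow> t \<in> {1/3..2/3}"
    by (auto simp: min_def)
  finally show ?thesis by (simp add: cos_120)
qed

lemma Re_circ_less_neg_half_iff:
  assumes "t \<in> {0..1}" shows "Re (circ t) < -1/2 \<longleftrightarrow> t \<in> {1/3<..<2/3}"
proof -
  have "Re (circ t) < cos (2*pi/3) \<longleftrightarrow> 2*pi/3 < 2*pi*min t (1-t)"
    unfolding Re_circ cos_2pi_fold[of t] using assms
    by (intro cos_mono_less_eq) (auto simp: min_def)
  also have "\<dots> \<longleftrightarrow> t \<in> {1/3<..<2/3}"
    by (auto simp: min_def)
  finally show ?thesis by (simp add: cos_120)
qed

lemma Im_circ_pos: "t \<in> {0<..<1/2} \<Longrightarrow> Im (circ t) > 0"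
  unfolding Im_circ by (rule sin_gt_zero) auto

lemma sphere_Re_le_neg_half_imp_arc:
  assumes "z \<in> sphere 0 1" "Re z \<le> -1/2" obtains t where "t \<in> {1/3..2/3}" "z = circ t"
proof -
  obtain t where t: "t \<in> {0..<1}" "z = circ t" using assms(1) by (auto simp: sphere_eq_circ_image)
  then show thesis using assms(2) Re_circ_le_neg_half_iff[of t] that by auto
qed

lemma sphere_Re_eq_neg_half:
  assumes "z \<in> sphere 0 1" "Re z = -1/2" shows "z = circ (1/3) \<or> z = circ (2/3)"
proof -
  obtain t where t: "t \<in> {0..<1}" "z = circ t" using assms(1) by (auto simp: sphere_eq_circ_image)
  then have "t \<in> {1/3..2/3}" "t \<notin> {1/3<..<2/3}"
    using assms(2) Re_circ_le_neg_half_iff[of t] Re_circ_less_neg_half_iff[of t] by auto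
  then have "t = 1/3 \<or> t = 2/3" by auto
  then show ?thesis using t(2) by blast
qed

text \<open>Continuous extension to Re z < 0 of the third value circ t \<mapsto> circ ((3t - 1)/2) on the
  arc 1/3 \<le> t \<le> 2/3, where Arg (- circ t) = 2 \<pi> t - \<pi>.\<close>
definition arc_stretch :: "complex \<Rightarrow> complex" where
  "arc_stretch z = circ (1/4 + 3 * Arg (-z) / (4*pi))"

lemma norm_arc_stretch [simp]: "norm (arc_stretch z) = 1"
  by (simp add: arc_stretch_def)

lemma arc_stretch_circ:
  assumes "t \<in> {1/3..2/3}" shows "arc_stretch (circ t) = circ ((3*t - 1)/2)"
proof -
  have "- circ t = cis (2*pi*t - pi)"
    by (simp add: circ_def flip: cis_divide)
  moreover have "2*pi*t - pi \<in> {-pi<..pi}"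
    using assms by (auto simp: field_simps)
  ultimately have "Arg (- circ t) = 2*pi*t - pi"
    by (simp add: Arg_cis)
  moreover have "1/4 + 3 * (2*pi*t - pi) / (4*pi) = (3*t - 1)/2"
    by (simp add: field_simps)
  ultimately show ?thesis
    unfolding arc_stretch_def by (simp only:)
qed

lemma arc_stretch_not_pm_one:
  assumes "z \<in> sphere 0 1" "Re z < -1/2" shows "arc_stretch z \<noteq> 1" "arc_stretch z \<noteq> -1"
proof -
  obtain t where t: "t \<in> {0..<1}" "z = circ t" using assms(1) by (auto simp: sphere_eq_circ_image)
  then have "t \<in> {1/3<..<2/3}" using assms(2) Re_circ_less_neg_half_iff[of t] by auto
  then have "Im (arc_stretch z) > 0"
    using t(2) arc_stretch_circ[of t] Im_circ_pos[of "(3*t - 1)/2"] by auto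
  then show "arc_stretch z \<noteq> 1" "arc_stretch z \<noteq> -1" by auto
qed

lemma arc_stretch_endpoints: "arc_stretch (circ (1/3)) = 1" "arc_stretch (circ (2/3)) = -1"
  using arc_stretch_circ[of "1/3"] arc_stretch_circ[of "2/3"] by simp_all

lemma continuous_on_arc_stretch: "continuous_on {z. Re z < 0} arc_stretch"
proof (rule continuous_at_imp_continuous_on, clarify)
  fix z :: complex assume "Re z < 0"
  then have "-z \<notin> \<real>\<^sub>\<le>\<^sub>0" by (auto simp: complex_nonpos_Reals_iff)
  then have "continuous (at z) (\<lambda>z. Arg (-z))"
    by (intro continuous_at_compose[of z uminus Arg, unfolded o_def]) (auto intro: continuous_at_Arg)
  then show "isCont arc_stretch z"
    unfolding arc_stretch_def circ_def cis_conv_exp by (auto intro!: continuous_intros)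
qed

lemma open_arc_stretch_vimage:
  assumes "c \<le> 0" "open T" shows "open (arc_stretch -` T \<inter> {z. Re z < c})"
proof -
  have "continuous_on {z. Re z < c} arc_stretch"
    using continuous_on_arc_stretch by (rule continuous_on_subset) (use assms in auto)
  then show ?thesis
    using assms continuous_on_open_vimage[of "{z. Re z < c}" arc_stretch] open_halfspace_Re_lt by blast
qed

lemma example_f_eq:
  assumes "z \<in> sphere 0 1"
  shows "example_f z = {1, -1} \<union> (if Re z \<le> -1/2 then {arc_stretch z} else {})"
proof -
  have "{circ ((3*t - 1)/2) | t. t \<in> {1/3..2/3} \<and> z = circ t} =
        (if Re z \<le> -1/2 then {arc_stretch z} else {})"
  proof (cases "Re z \<le> -1/2")
    case True
    then obtain t0 where t0: "t0 \<in> {1/3..2/3}" "z = circ t0"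
      using assms sphere_Re_le_neg_half_imp_arc by blast
    have "{circ ((3*t - 1)/2) | t. t \<in> {1/3..2/3} \<and> z = circ t} = {arc_stretch z}"
    proof (intro equalityI subsetI)
      fix y assume "y \<in> {circ ((3*t - 1)/2) | t. t \<in> {1/3..2/3} \<and> z = circ t}"
      then show "y \<in> {arc_stretch z}" using arc_stretch_circ by auto
    qed (use t0 arc_stretch_circ in auto)
    then show ?thesis using True by simp
  next
    case False
    then show ?thesis using Re_circ_le_neg_half_iff by force
  qed
  then show ?thesis unfolding example_f_def by simp
qed

lemma example_f_subset: "z \<in> sphere 0 1 \<Longrightarrow> example_f z \<subseteq> {1, -1, arc_stretch z}"
  by (auto simp: example_f_eq)

lemma example_f_subset_sphere: "z \<in> sphere 0 1 \<Longrightarrow> example_f z \<subseteq> sphere 0 1"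
  using example_f_subset by fastforce

lemma usc_map_example_f: "usc_map S1 S1 example_f"
  unfolding usc_map_def
proof (intro conjI allI impI ballI)
  fix U assume "openin S1 U"
  then obtain T where T: "open T" "U = sphere 0 1 \<inter> T" by (auto simp: S1_def openin_open)
  show "openin S1 {x \<in> topspace S1. example_f x \<subseteq> U}"
  proof (cases "1 \<in> T \<and> -1 \<in> T")
    case True
    have "example_f z \<subseteq> U \<longleftrightarrow> Re z > -1/2 \<or> (arc_stretch z \<in> T \<and> Re z < 0)"
      if "z \<in> sphere 0 1" for z
      using that True T by (cases "Re z \<le> -1/2") (auto simp: example_f_eq)
    then have "{x \<in> topspace S1. example_f x \<subseteq> U} =
          sphere 0 1 \<inter> ({z. Re z > -1/2} \<union> (arc_stretch -` T \<inter> {z. Re z < 0}))"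
      unfolding S1_def topspace_euclidean_subtopology by blast
    moreover have "open ({z. Re z > -1/2} \<union> (arc_stretch -` T \<inter> {z. Re z < 0}))"
      using open_halfspace_Re_gt open_arc_stretch_vimage[OF _ T(1)] by auto
    ultimately show ?thesis by (simp add: S1_def openin_open_Int)
  next
    case False
    then have "{x \<in> topspace S1. example_f x \<subseteq> U} = {}"
      using T by (auto simp: S1_def example_f_eq)
    then show ?thesis by (simp only: openin_empty)
  qed
qed (simp add: S1_def example_f_subset_sphere)

lemma lsc_map_example_f: "lsc_map S1 S1 example_f"
  unfolding lsc_map_def
proof (intro conjI allI impI ballI)
  fix U assume "openin S1 U"
  then obtain T where T: "open T" "U = sphere 0 1 \<inter> T" by (auto simp: S1_def openin_open)
  show "openin S1 {x \<in> topspace S1. example_f x \<inter> U \<noteq> {}}"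
  proof (cases "1 \<in> T \<or> -1 \<in> T")
    case True
    then have "{x \<in> topspace S1. example_f x \<inter> U \<noteq> {}} = topspace S1"
      using T by (auto simp: S1_def example_f_eq)
    then show ?thesis by simp
  next
    case False
    have "example_f z \<inter> U \<noteq> {} \<longleftrightarrow> arc_stretch z \<in> T \<and> Re z < -1/2"
      if z: "z \<in> sphere 0 1" for z
    proof (cases "Re z = -1/2")
      case True
      then have "arc_stretch z \<in> {1, -1}"
        using sphere_Re_eq_neg_half[OF z] arc_stretch_endpoints by auto
      then show ?thesis using z True T False by (auto simp: example_f_eq)
    next
      case False
      then show ?thesis using z T \<open>\<not> (1 \<in> T \<or> -1 \<in> T)\<close> by (auto simp: example_f_eq)
    qed
    then have "{x \<in> topspace S1. example_f x \<inter> U \<noteq> {}} =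
               sphere 0 1 \<inter> (arc_stretch -` T \<inter> {z. Re z < -1/2})"
      unfolding S1_def topspace_euclidean_subtopology by blast
    moreover have "open (arc_stretch -` T \<inter> {z. Re z < -1/2})"
      using open_arc_stretch_vimage[OF _ T(1)] by simp
    ultimately show ?thesis by (simp add: S1_def openin_open_Int)
  qed
qed (simp add: S1_def example_f_subset_sphere)

lemma example_f_at_most_3_valued: "at_most_n_valued S1 S1 3 example_f"
  unfolding at_most_n_valued_def
proof (intro conjI lsc_map_example_f usc_map_example_f ballI)
  fix z assume "z \<in> topspace S1"
  then have z: "z \<in> sphere 0 1" by (simp add: S1_def)
  show "example_f z \<noteq> {}" using example_f_eq[OF z] by simp
  show "finite (example_f z)" using finite_subset[OF example_f_subset[OF z]] by simp
  have "card {1, -1, arc_stretch z} \<le> 3" by (simp add: card_insert_if)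
  then show "card (example_f z) \<le> 3"
    using card_mono[OF _ example_f_subset[OF z]] by simp
qed

lemma frontier_of_Int_ball_subset: "top_of_set S frontier_of (S \<inter> ball c r) \<subseteq> sphere c r"
proof -
  have "top_of_set S closure_of (S \<inter> ball c r) \<subseteq> S \<inter> cball c r"
    by (rule closure_of_minimal) (auto intro: closedin_closed_Int)
  moreover have "top_of_set S interior_of (S \<inter> ball c r) = S \<inter> ball c r"
    by (simp add: interior_of_openin openin_open_Int)
  ultimately show ?thesis
    unfolding frontier_of_def by auto
qed

lemma weighted_map_isolated_weight_locally_constant:
  fixes n :: "'a \<Rightarrow> 'b::metric_space set"
  assumes wm: "weighted_map X (top_of_set S) n w" and x: "x \<in> topspace X" and y: "y \<in> S"
    and r: "r > 0"
    and isolated_at: "\<And>y'. y' \<in> n x \<Longrightarrow> y' \<noteq> y \<Longrightarrow> r < dist y y'"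
    and N: "openin X N" "x \<in> N"
    and isolated_near: "\<And>z y'. z \<in> N \<Longrightarrow> y' \<in> n z \<Longrightarrow> y' \<noteq> y \<Longrightarrow> r \<le> dist y y'"
  shows "\<exists>V. openin X V \<and> x \<in> V \<and> (\<forall>z\<in>V. w z y = w x y)"
proof -
  let ?U = "S \<inter> ball y r"
  have sum_eq: "(\<Sum>y'\<in>?U \<inter> n z. w z y') = w z y"
    if z: "z \<in> topspace X" and far: "\<And>y'. y' \<in> n z \<Longrightarrow> y' \<noteq> y \<Longrightarrow> r \<le> dist y y'" for z
  proof (cases "y \<in> n z")
    case True
    then have "?U \<inter> n z = {y}" using y r far by fastforce
    then show ?thesis by simp
  next
    case False
    then have "?U \<inter> n z = {}" using far by fastforce
    moreover have "w z y = 0" using wm z y False by (simp add: weighted_map_def)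
    ultimately show ?thesis by simp
  qed
  have "y' \<notin> sphere y r" if "y' \<in> n x" for y'
    using isolated_at[OF that] r by (cases "y' = y") auto
  then have "n x \<inter> top_of_set S frontier_of ?U = {}"
    using frontier_of_Int_ball_subset by blast
  moreover have "openin (top_of_set S) ?U" by (simp add: openin_open_Int)
  ultimately obtain V where V: "openin X V" "x \<in> V"
      and sums: "\<forall>z\<in>V. (\<Sum>y'\<in>?U \<inter> n x. w x y') = (\<Sum>y'\<in>?U \<inter> n z. w z y')"
    using wm x unfolding weighted_map_def by blast
  have "\<forall>z\<in>V \<inter> N. w z y = w x y"
  proof
    fix z assume "z \<in> V \<inter> N"
    then have "z \<in> topspace X" "z \<in> N" using openin_subset[OF V(1)] by auto
    then show "w z y = w x y"
      using sums sum_eq[of z] sum_eq[OF x] isolated_at isolated_near \<open>z \<in> V \<inter> N\<close>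
      by (metis IntD1 less_imp_le)
  qed
  then show ?thesis using V N by blast
qed

lemma example_weight_at_one_locally_constant:
  assumes wm: "weighted_map S1 S1 example_f w"
    and z: "z \<in> sphere 0 1" and z_ne: "z \<noteq> circ (1/3)"
  shows "\<exists>V. openin S1 V \<and> z \<in> V \<and> (\<forall>z'\<in>V. w z' 1 = w z 1)"
proof -
  have wm': "weighted_map S1 (top_of_set (sphere 0 1)) example_f w" using wm by (simp add: S1_def)
  have dist_pm_one: "dist (1::complex) (-1) = 2" by (simp add: dist_norm)
  show ?thesis
  proof (cases "Re z \<le> -1/2")
    case False
    let ?N = "sphere 0 1 \<inter> {z. Re z > -1/2}"
    show ?thesis
    proof (rule weighted_map_isolated_weight_locally_constant[OF wm', of z 1 1 ?N])
      show "openin S1 ?N" by (simp add: S1_def openin_open_Int open_halfspace_Re_gt)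
    qed (use z False dist_pm_one in \<open>auto simp: S1_def example_f_eq\<close>)
  next
    case True
    have "arc_stretch z \<noteq> 1"
    proof (cases "Re z = -1/2")
      case True
      then have "z = circ (2/3)" using sphere_Re_eq_neg_half[OF z] z_ne by blast
      then show ?thesis using arc_stretch_endpoints by simp
    next
      case False
      then show ?thesis using arc_stretch_not_pm_one[OF z] \<open>Re z \<le> -1/2\<close> by simp
    qed
    define d where "d = dist 1 (arc_stretch z)"
    have d: "0 < d" "d \<le> 2" using \<open>arc_stretch z \<noteq> 1\<close>
      by (auto simp: d_def dist_norm intro: order_trans[OF norm_triangle_ineq4])
    let ?N = "sphere 0 1 \<inter> (arc_stretch -` ball (arc_stretch z) (d/2) \<inter> {z. Re z < 0})"
    show ?thesis
    proof (rule weighted_map_isolated_weight_locally_constant[OF wm', of z 1 "d/2" ?N])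
      show "openin S1 ?N"
        using open_arc_stretch_vimage[of 0 "ball (arc_stretch z) (d/2)"]
        by (simp add: S1_def openin_open_Int)
      fix z' y' assume z': "z' \<in> ?N" and "y' \<in> example_f z'" "y' \<noteq> 1"
      then have "y' = -1 \<or> y' = arc_stretch z'" using example_f_subset by blast
      moreover have "dist (arc_stretch z') (arc_stretch z) < d/2"
        using z' by (simp add: dist_commute)
      ultimately show "d/2 \<le> dist 1 y'"
        using d dist_pm_one dist_triangle[of 1 "arc_stretch z" "arc_stretch z'"] d_def by auto
    qed (use z True d dist_pm_one in \<open>auto simp: S1_def example_f_eq d_def\<close>)
  qed
qed

lemma connected_punctured_circle:
  assumes "b \<in> sphere (0::complex) 1" shows "connected (sphere 0 1 - {b})"
proof -
  have "(sphere 0 1 - {b}) homeomorphic {x::complex. 1 \<bullet> x = 0}"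
    using assms by (intro homeomorphic_punctured_sphere_hyperplane) auto
  moreover have "connected {x::complex. 1 \<bullet> x = 0}"
    by (intro convex_connected convex_hyperplane)
  ultimately show ?thesis using homeomorphic_connectedness by blast
qed

lemma example_weight_at_one_constant:
  assumes "weighted_map S1 S1 example_f w"
  shows "(\<lambda>z. w z 1) constant_on (sphere 0 1 - {circ (1/3)})"
proof (rule locally_constant_imp_constant)
  show "connected (sphere 0 1 - {circ (1/3)})" by (simp add: connected_punctured_circle)
  fix z assume z: "z \<in> sphere 0 1 - {circ (1/3)}"
  then obtain V where V: "openin S1 V" "z \<in> V" "\<forall>z'\<in>V. w z' 1 = w z 1"
    using example_weight_at_one_locally_constant[OF assms] by blast
  then obtain T where T: "open T" "V = sphere 0 1 \<inter> T" by (auto simp: S1_def openin_open)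
  show "\<exists>T. openin (top_of_set (sphere 0 1 - {circ (1/3)})) T \<and> z \<in> T \<and>
             (\<forall>z'\<in>T. w z' 1 = w z 1)"
  proof (intro exI conjI)
    show "openin (top_of_set (sphere 0 1 - {circ (1/3)})) ((sphere 0 1 - {circ (1/3)}) \<inter> T)"
      using T(1) by (rule openin_open_Int)
    show "z \<in> (sphere 0 1 - {circ (1/3)}) \<inter> T" using V(2) T(2) z by blast
    show "\<forall>z'\<in>(sphere 0 1 - {circ (1/3)}) \<inter> T. w z' 1 = w z 1" using V(3) T(2) by blast
  qed
qed

lemma circ_third_approached_from_both_sides:
  assumes "openin S1 V" "circ (1/3) \<in> V"
  obtains z1 z2 where "z1 \<in> V" "Re z1 > -1/2" "z2 \<in> V" "Re z2 < -1/2"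
proof -
  obtain T where T: "open T" "V = sphere 0 1 \<inter> T"
    using assms(1) by (auto simp: S1_def openin_open)
  have "open (circ -` T)" using T(1) continuous_on_circ by (rule open_vimage)
  then obtain e where e: "e > 0" "ball (1/3) e \<subseteq> circ -` T"
    using assms(2) T(2) open_contains_ball by blast
  define s where "s = min (e/2) (1/12)"
  have s: "0 < s" "s \<le> 1/12" "s < e" using e by (auto simp: s_def)
  have in_V: "circ t \<in> V" if "\<bar>t - 1/3\<bar> < e" for t
  proof -
    have "t \<in> ball (1/3) e" using that by (simp add: dist_real_def abs_minus_commute)
    then show ?thesis using e(2) T(2) by auto
  qed
  have "Re (circ (1/3 - s)) > -1/2"
    using Re_circ_le_neg_half_iff[of "1/3 - s"] s by auto
  moreover have "Re (circ (1/3 + s)) < -1/2"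
    using Re_circ_less_neg_half_iff[of "1/3 + s"] s by auto
  moreover have "circ (1/3 - s) \<in> V" "circ (1/3 + s) \<in> V" using in_V s by simp_all
  ultimately show thesis using that by blast
qed

lemma example_weight_near_one_at_third:
  assumes wm: "weighted_map S1 S1 example_f w"
  obtains V where "openin S1 V" "circ (1/3) \<in> V"
    "\<forall>z\<in>V. w (circ (1/3)) 1 = (\<Sum>y\<in>sphere 0 1 \<inter> ball 1 1 \<inter> example_f z. w z y)"
proof -
  define x0 where "x0 = circ (1/3)"
  have x0: "x0 \<in> sphere 0 1" "Re x0 = -1/2" by (simp_all add: x0_def Re_circ cos_120)
  have f_x0: "example_f x0 = {1, -1}"
    using example_f_eq[OF x0(1)] x0(2) arc_stretch_endpoints by (auto simp: x0_def)
  have dist_pm_one: "dist (1::complex) (-1) = 2" by (simp add: dist_norm)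
  let ?U = "sphere 0 1 \<inter> ball (1::complex) 1"
  have "example_f x0 \<inter> S1 frontier_of ?U = {}"
    using frontier_of_Int_ball_subset[of "sphere 0 1" 1 1] f_x0 dist_pm_one by (auto simp: S1_def)
  moreover have "openin S1 ?U" by (simp add: S1_def openin_open_Int)
  moreover have "x0 \<in> topspace S1" using x0 by (simp add: S1_def)
  ultimately obtain V where V: "openin S1 V" "x0 \<in> V"
      and sums: "\<forall>z\<in>V. (\<Sum>y\<in>?U \<inter> example_f x0. w x0 y) = (\<Sum>y\<in>?U \<inter> example_f z. w z y)"
    using wm unfolding weighted_map_def by blast
  have "?U \<inter> example_f x0 = {1}" using f_x0 dist_pm_one by auto
  then have "\<forall>z\<in>V. w x0 1 = (\<Sum>y\<in>?U \<inter> example_f z. w z y)" using sums by simp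
  then show thesis using that V unfolding x0_def by blast
qed

lemma example_weight_at_one_jumps:
  assumes wm: "weighted_map S1 S1 example_f w"
    and pos: "\<And>z y. z \<in> sphere 0 1 \<Longrightarrow> y \<in> example_f z \<Longrightarrow> w z y > 0"
  obtains z1 z2 where "z1 \<in> sphere 0 1 - {circ (1/3)}" "z2 \<in> sphere 0 1 - {circ (1/3)}"
    "w z2 1 < w z1 1"
proof -
  define x0 where "x0 = circ (1/3)"
  have x0: "x0 \<in> sphere 0 1" "Re x0 = -1/2" by (simp_all add: x0_def Re_circ cos_120)
  have dist_pm_one: "dist (1::complex) (-1) = 2" by (simp add: dist_norm)
  let ?U = "sphere 0 1 \<inter> ball (1::complex) 1"
  obtain V where V: "openin S1 V" "x0 \<in> V"
      and sums_x0: "\<forall>z\<in>V. w x0 1 = (\<Sum>y\<in>?U \<inter> example_f z. w z y)"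
    using example_weight_near_one_at_third[OF wm] unfolding x0_def by blast
  let ?W = "V \<inter> (sphere 0 1 \<inter> (arc_stretch -` ball 1 1 \<inter> {z. Re z < 0}))"
  have "openin S1 ?W"
    using V(1) open_arc_stretch_vimage[of 0 "ball 1 1"] by (auto simp: S1_def openin_open_Int)
  moreover have "x0 \<in> ?W"
    using V(2) x0 arc_stretch_endpoints by (simp add: x0_def)
  ultimately obtain z1 z2 where z1: "z1 \<in> ?W" "Re z1 > -1/2" and z2: "z2 \<in> ?W" "Re z2 < -1/2"
    using circ_third_approached_from_both_sides unfolding x0_def by blast
  have "w x0 1 = (\<Sum>y\<in>?U \<inter> example_f z1. w z1 y)" using sums_x0 z1(1) by blast
  also have "?U \<inter> example_f z1 = {1}"
    using z1 example_f_eq[of z1] dist_pm_one by auto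
  finally have outside: "w x0 1 = w z1 1" by simp
  have "arc_stretch z2 \<noteq> 1" using arc_stretch_not_pm_one z2 by auto
  have "w x0 1 = (\<Sum>y\<in>?U \<inter> example_f z2. w z2 y)" using sums_x0 z2(1) by blast
  also have "?U \<inter> example_f z2 = {1, arc_stretch z2}"
    using z2 example_f_eq[of z2] dist_pm_one by (auto simp: dist_commute)
  finally have inside: "w x0 1 = w z2 1 + w z2 (arc_stretch z2)"
    using \<open>arc_stretch z2 \<noteq> 1\<close> by simp
  have "w z2 (arc_stretch z2) > 0" using pos z2 example_f_eq by auto
  then have "w z2 1 < w z1 1" using outside inside by simp
  moreover have "z1 \<noteq> x0" "z2 \<noteq> x0" using z1 z2 x0 by auto
  ultimately show thesis using that z1 z2 unfolding x0_def by blast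
qed

lemma example_f_not_N_weighted: "\<not> N_weighted_map S1 S1 example_f w"
proof
  assume "N_weighted_map S1 S1 example_f w"
  then have wm: "weighted_map S1 S1 example_f w"
    and pos: "\<And>z y. z \<in> sphere 0 1 \<Longrightarrow> y \<in> example_f z \<Longrightarrow> w z y > 0"
    by (auto simp: N_weighted_map_def S1_def)
  obtain z1 z2 where "z1 \<in> sphere 0 1 - {circ (1/3)}" "z2 \<in> sphere 0 1 - {circ (1/3)}" "w z2 1 < w z1 1"
    using example_weight_at_one_jumps[OF wm pos] by blast
  then show False
    using example_weight_at_one_constant[OF wm] by (auto simp: constant_on_def)
qed

theorem mainTheorem13:
  shows "at_most_n_valued S1 S1 3 example_f \<and>
         \<not> (\<exists>w :: complex \<Rightarrow> complex \<Rightarrow> nat. N_weighted_map S1 S1 example_f w)"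
  using example_f_at_most_3_valued example_f_not_N_weighted by blast

end
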